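(* Let $\{\Delta_1,\dots,\Delta_r\}$ be a nef-partition of a reflexive polytope $\Delta$ with dual nef-partition $\{\nabla_1,\dots,\nabla_r\}$. Let $v$ be any lattice point of $\partial\Delta^*$ and $\Gamma(v)$ the minimal face of $\Delta^*$ containing $v$. Then $\Gamma(v)$ is a face of $\nabla_i$ for some $i\in\{1,\dots,r\}$.
   Context: Let $M\cong\mathbb Z^d$, $N=\mathrm{Hom}(M,\mathbb Z)$, $\langle\cdot,\cdot\rangle$ the pairing. A $d$-dimensional lattice polytope $\Delta\subset M_{\mathbb R}$ is reflexive if $\Delta=\{x:\langle x,e_k\rangle\ge-1,\ k=1,\dots,n\}$ with $e_k\in N$ the primitive inward facet normals; $\Delta^*=\mathrm{Conv}(e_1,\dots,e_n)$. A nef-partition of $\Delta$ is a Minkowski decomposition $\Delta=\Delta_1+\dots+\Delta_r$ into lattice polytopes with $\varphi_j(e_k)\in\{0,1\}$ for all $j,k$, where $\varphi_j(y)=-\min_{x\in\Delta_j}\langle x,y\rangle$. The dual nef-partition consists of $\nabla_j=\mathrm{Conv}(\{0\}\cup\{e_k:\varphi_j(e_k)=1\})\subset N_{\mathbb R}$; it is known that $\Delta^*=\mathrm{Conv}(\nabla_1\cup\dots\cup\nabla_r)$. *)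

theory Defs
  imports "HOL-Analysis.Analysis"
begin

text \<open>Both M_R and N_R are modelled as real^'n (with M = N = Z^d the integer points);
  the pairing <x,y> is the standard inner product x \<bullet> y.\<close>

definition lattice_point :: "real^'n \<Rightarrow> bool" where
  "lattice_point x \<longleftrightarrow> (\<forall>i. x $ i \<in> \<int>)"

definition lattice_polytope :: "(real^'n) set \<Rightarrow> bool" where
  "lattice_polytope P \<longleftrightarrow> (\<exists>S. finite S \<and> (\<forall>x\<in>S. lattice_point x) \<and> P = convex hull S)"

definition primitive :: "real^'n \<Rightarrow> bool" where
  "primitive e \<longleftrightarrow> lattice_point e \<and> e \<noteq> 0 \<and>
     \<not> (\<exists>w (m::nat). lattice_point w \<and> m \<ge> 2 \<and> e = of_nat m *\<^sub>R w)"

definition reflexive :: "(real^'n) set \<Rightarrow> bool" where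
  "reflexive \<Delta> \<longleftrightarrow> lattice_polytope \<Delta> \<and> aff_dim \<Delta> = int CARD('n) \<and>
     (\<forall>F. F facet_of \<Delta> \<longrightarrow>
        (\<exists>e. primitive e \<and> (\<forall>x\<in>\<Delta>. x \<bullet> e \<ge> -1) \<and> F = \<Delta> \<inter> {x. x \<bullet> e = -1}))"

definition facet_normals :: "(real^'n) set \<Rightarrow> (real^'n) set" where
  "facet_normals \<Delta> = {e. primitive e \<and> (\<forall>x\<in>\<Delta>. x \<bullet> e \<ge> -1) \<and>
                             (\<Delta> \<inter> {x. x \<bullet> e = -1}) facet_of \<Delta>}"

definition dual_polytope :: "(real^'n) set \<Rightarrow> (real^'n) set" where
  "dual_polytope \<Delta> = convex hull (facet_normals \<Delta>)"

definition supp_phi :: "(real^'n) set \<Rightarrow> real^'n \<Rightarrow> real" where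
  "supp_phi D y = - Inf ((\<lambda>x. x \<bullet> y) ` D)"

definition minkowski_sum :: "nat \<Rightarrow> (nat \<Rightarrow> (real^'n) set) \<Rightarrow> (real^'n) set" where
  "minkowski_sum r D = {x. \<exists>f. (\<forall>j\<in>{1..r}. f j \<in> D j) \<and> x = (\<Sum>j=1..r. f j)}"

definition nef_partition :: "(real^'n) set \<Rightarrow> nat \<Rightarrow> (nat \<Rightarrow> (real^'n) set) \<Rightarrow> bool" where
  "nef_partition \<Delta> r D \<longleftrightarrow> reflexive \<Delta> \<and> r \<ge> 1 \<and>
     (\<forall>j\<in>{1..r}. lattice_polytope (D j)) \<and>
     \<Delta> = minkowski_sum r D \<and>
     (\<forall>j\<in>{1..r}. \<forall>e\<in>facet_normals \<Delta>. supp_phi (D j) e \<in> {0, 1})"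

definition dual_nef :: "(real^'n) set \<Rightarrow> (nat \<Rightarrow> (real^'n) set) \<Rightarrow> nat \<Rightarrow> (real^'n) set" where
  "dual_nef \<Delta> D j = convex hull (insert 0 {e\<in>facet_normals \<Delta>. supp_phi (D j) e = 1})"

end

theory Submission
  imports Defs
begin

(* A boundary point v of the dual polytope has a supporting hyperplane; as the facet normals of
   a bounded polytope cannot all lie in a closed half-space, it rescales to a point m of Delta
   with <m,v> = -1. Writing m as a sum of points of the Delta_j and replacing each of them by a
   lattice vertex minimising <-,v>, integrality of <-,v> gives a point g of one Delta_j with
   <g,v> <= -1. Because phi_j <= 1 on the facet normals, <g,-> >= -1 on the dual polytope, so
   the points y with <g,y> = -1 form a face containing v, hence containing Gamma. That face is
   spanned by facet normals e with <g,e> = -1, which forces phi_j(e) = 1, so it lies in nabla_j. *)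

lemma convex_hull_Int_supporting_hyperplane_ge:
  fixes T :: "'a::euclidean_space set"
  assumes "\<And>x. x \<in> T \<Longrightarrow> c \<le> a \<bullet> x"
  shows "convex hull T \<inter> {x. a \<bullet> x = c} = convex hull {x\<in>T. a \<bullet> x = c}"
proof
  have "convex hull {x\<in>T. a \<bullet> x = c} \<subseteq> {x. a \<bullet> x = c}"
    by (rule hull_minimal) (auto simp: convex_hyperplane)
  moreover have "convex hull {x\<in>T. a \<bullet> x = c} \<subseteq> convex hull T"
    by (rule hull_mono) auto
  ultimately show "convex hull {x\<in>T. a \<bullet> x = c} \<subseteq> convex hull T \<inter> {x. a \<bullet> x = c}"
    by blast
next
  show "convex hull T \<inter> {x. a \<bullet> x = c} \<subseteq> convex hull {x\<in>T. a \<bullet> x = c}"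
  proof
    fix y assume y: "y \<in> convex hull T \<inter> {x. a \<bullet> x = c}"
    then obtain S where S: "finite S" "S \<subseteq> T" "y \<in> convex hull S"
      by (auto simp: caratheodory_aff_dim[of T])
    have "convex hull S \<subseteq> {x. c \<le> a \<bullet> x}"
      using S(2) assms by (intro hull_minimal) (auto simp: convex_halfspace_ge)
    then have "(convex hull S \<inter> {x. a \<bullet> x = c}) face_of convex hull S"
      by (intro face_of_Int_supporting_hyperplane_ge) auto
    then obtain S' where S': "S' \<subseteq> S" "convex hull S \<inter> {x. a \<bullet> x = c} = convex hull S'"
      using face_of_convex_hull_subset finite_imp_compact S(1) by metis
    then have "S' \<subseteq> {x\<in>T. a \<bullet> x = c}"
      using S(2) hull_subset[of S' convex] by blast
    then show "y \<in> convex hull {x\<in>T. a \<bullet> x = c}"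
      using S' S(3) y hull_mono by blast
  qed
qed

lemma supporting_hyperplane_frontier:
  fixes S :: "'a::euclidean_space set"
  assumes "convex S" "x \<in> S" "x \<notin> interior S"
  obtains a where "a \<noteq> 0" "\<And>y. y \<in> S \<Longrightarrow> a \<bullet> x \<le> a \<bullet> y"
proof (cases "interior S = {}")
  case True
  then obtain a b where "a \<noteq> 0" and S: "S \<subseteq> {y. a \<bullet> y = b}"
    using empty_interior_subset_hyperplane assms(1) by metis
  moreover have "a \<bullet> x \<le> a \<bullet> y" if "y \<in> S" for y
  proof -
    have "a \<bullet> x = b" "a \<bullet> y = b" using S assms(2) that by blast+
    then show ?thesis by simp
  qed
  ultimately show thesis using that by blast
next
  case False
  then have "x \<notin> rel_interior S"
    using assms(3) interior_rel_interior_gen[of S] by (auto split: if_splits)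
  then obtain a where "a \<noteq> 0" "\<And>y. y \<in> closure S \<Longrightarrow> a \<bullet> x \<le> a \<bullet> y"
    using supporting_hyperplane_relative_frontier assms(1,2) closure_subset by (metis subsetD)
  then show thesis using that closure_subset by blast
qed

lemma lattice_point_inner_Ints: "lattice_point x \<Longrightarrow> lattice_point y \<Longrightarrow> x \<bullet> y \<in> \<int>"
  unfolding lattice_point_def inner_vec_def by (intro Ints_sum Ints_mult) auto

lemma lattice_polytope_inner_min_at_lattice_point:
  assumes "lattice_polytope D" "D \<noteq> {}"
  obtains g where "g \<in> D" "lattice_point g" "\<And>y. y \<in> D \<Longrightarrow> g \<bullet> w \<le> y \<bullet> w"
proof -
  obtain S where S: "finite S" "\<forall>x\<in>S. lattice_point x" "D = convex hull S"
    using assms(1) by (auto simp: lattice_polytope_def)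
  define g where "g = arg_min_on (\<lambda>x. x \<bullet> w) S"
  have "S \<noteq> {}" using S(3) assms(2) by auto
  then have g: "g \<in> S" "\<And>x. x \<in> S \<Longrightarrow> g \<bullet> w \<le> x \<bullet> w"
    using arg_min_if_finite[OF S(1)] unfolding g_def by (metis not_le_imp_less)+
  have "D \<subseteq> {y. g \<bullet> w \<le> w \<bullet> y}"
    unfolding S(3)
    by (intro hull_minimal) (use g(2) convex_halfspace_ge[of "g \<bullet> w" w] in \<open>auto simp: inner_commute\<close>)
  moreover have "g \<in> D" "lattice_point g"
    using g(1) S by (auto simp: hull_inc)
  ultimately show thesis
    using that by (auto simp: inner_commute)
qed

lemma supp_phi_le_inner:
  assumes "lattice_polytope D" "y \<in> D"
  shows "- supp_phi D w \<le> y \<bullet> w"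
proof -
  obtain g where "\<And>y. y \<in> D \<Longrightarrow> g \<bullet> w \<le> y \<bullet> w"
    using lattice_polytope_inner_min_at_lattice_point assms by blast
  then have "bdd_below ((\<lambda>x. x \<bullet> w) ` D)" by (rule bdd_belowI2)
  then show ?thesis
    unfolding supp_phi_def using assms(2) by (simp add: cInf_lower)
qed

lemma facet_normals_inner_ge: "e \<in> facet_normals \<Delta> \<Longrightarrow> x \<in> \<Delta> \<Longrightarrow> -1 \<le> x \<bullet> e"
  by (simp add: facet_normals_def)

lemma reflexive_imp_polytope: "reflexive \<Delta> \<Longrightarrow> polytope \<Delta>"
  unfolding reflexive_def lattice_polytope_def polytope_def by blast

lemma reflexive_interior_nonempty:
  fixes \<Delta> :: "(real^'n) set"
  assumes "reflexive \<Delta>"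
  shows "interior \<Delta> \<noteq> {}"
proof -
  have full: "aff_dim \<Delta> = int DIM(real^'n)"
    using assms by (simp add: reflexive_def)
  then have "\<Delta> \<noteq> {}" by auto
  then have "rel_interior \<Delta> \<noteq> {}"
    using assms reflexive_imp_polytope polytope_imp_convex rel_interior_eq_empty by blast
  then show ?thesis
    using full interior_rel_interior_gen[of \<Delta>] by simp
qed

lemma reflexive_frontier_in_facet:
  assumes "reflexive \<Delta>" "z \<in> frontier \<Delta>"
  obtains e where "e \<in> facet_normals \<Delta>" "z \<bullet> e = -1"
proof -
  have "polyhedron \<Delta>"
    using assms(1) reflexive_imp_polytope polytope_imp_polyhedron by blast
  moreover have "z \<in> rel_frontier \<Delta>"
    using assms rel_frontier_nonempty_interior reflexive_interior_nonempty by blast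
  ultimately obtain F where F: "F facet_of \<Delta>" "z \<in> F"
    using rel_frontier_of_polyhedron by blast
  then obtain e where "primitive e" "\<forall>x\<in>\<Delta>. -1 \<le> x \<bullet> e" "F = \<Delta> \<inter> {x. x \<bullet> e = -1}"
    using assms(1) by (auto simp: reflexive_def)
  then show thesis
    using that F by (auto simp: facet_normals_def)
qed

lemma reflexive_eq_facet_halfspaces:
  fixes \<Delta> :: "(real^'n) set"
  assumes "reflexive \<Delta>"
  shows "\<Delta> = {x. \<forall>e\<in>facet_normals \<Delta>. -1 \<le> x \<bullet> e}"
proof (intro equalityI subsetI CollectI ballI facet_normals_inner_ge)
  fix x assume x: "x \<in> {x. \<forall>e\<in>facet_normals \<Delta>. -1 \<le> x \<bullet> e}"
  show "x \<in> \<Delta>"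
  proof (rule ccontr)
    (* otherwise the segment from an interior point p to x leaves Delta through a facet
       hyperplane <-,e> = -1, although <p,e> > -1 and <x,e> >= -1 *)
    assume "x \<notin> \<Delta>"
    obtain p where p: "p \<in> interior \<Delta>"
      using reflexive_interior_nonempty assms by blast
    then have "closed_segment p x \<inter> frontier \<Delta> \<noteq> {}"
      using \<open>x \<notin> \<Delta>\<close> interior_subset by (intro connected_Int_frontier) auto
    then obtain z where z: "z \<in> closed_segment p x" "z \<in> frontier \<Delta>" by blast
    obtain e where e: "e \<in> facet_normals \<Delta>" "z \<bullet> e = -1"
      using reflexive_frontier_in_facet assms z(2) by blast
    have "e \<noteq> 0"
      using e(1) by (simp add: facet_normals_def primitive_def)
    have "interior \<Delta> \<subseteq> interior {y. -1 \<le> e \<bullet> y}"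
      using facet_normals_inner_ge[OF e(1)] by (intro interior_mono subsetI CollectI) (metis inner_commute)
    then have "p \<in> {y. -1 < e \<bullet> y}"
      using p interior_halfspace_ge[OF \<open>e \<noteq> 0\<close>] by blast
    then have pe: "-1 < p \<bullet> e"
      by (simp add: inner_commute)
    have "z \<in> \<Delta>"
      using z(2) assms reflexive_imp_polytope polytope_imp_closed frontier_subset_closed by blast
    obtain t where t: "z = (1 - t) *\<^sub>R p + t *\<^sub>R x" "0 \<le> t" "t \<le> 1"
      using z(1) in_segment(1) by blast
    have "t \<noteq> 1"
      using t(1) \<open>z \<in> \<Delta>\<close> \<open>x \<notin> \<Delta>\<close> by auto
    then have "t - 1 < (1 - t) * (p \<bullet> e)"
      using pe t(3) mult_strict_left_mono[of "-1" "p \<bullet> e" "1 - t"] by simp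
    moreover have "- t \<le> t * (x \<bullet> e)"
      using x e(1) t(2) mult_left_mono[of "-1" "x \<bullet> e" t] by simp
    ultimately have "-1 < (1 - t) * (p \<bullet> e) + t * (x \<bullet> e)"
      by linarith
    then show False
      using e(2) t(1) by (simp add: inner_add_left)
  qed
qed

lemma reflexive_facet_normals_nonneg_imp_zero:
  fixes a :: "real^'n"
  assumes "reflexive \<Delta>" "\<And>e. e \<in> facet_normals \<Delta> \<Longrightarrow> 0 \<le> a \<bullet> e"
  shows "a = 0"
proof (rule ccontr)
  assume "a \<noteq> 0"
  obtain x where x: "x \<in> \<Delta>"
    using reflexive_interior_nonempty[OF assms(1)] interior_subset by blast
  have ray: "x + t *\<^sub>R a \<in> \<Delta>" if "0 \<le> t" for t
  proof (subst reflexive_eq_facet_halfspaces[OF assms(1)], intro CollectI ballI)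
    fix e assume e: "e \<in> facet_normals \<Delta>"
    have "0 \<le> t * (a \<bullet> e)"
      using that assms(2)[OF e] by simp
    then show "-1 \<le> (x + t *\<^sub>R a) \<bullet> e"
      using facet_normals_inner_ge[OF e x] by (simp add: inner_add_left)
  qed
  obtain B where B: "\<And>y. y \<in> \<Delta> \<Longrightarrow> norm y \<le> B"
    using assms(1) reflexive_imp_polytope polytope_imp_bounded bounded_iff by metis
  define t where "t = (B + norm x + 1) / norm a"
  have "0 \<le> B" using B[OF x] norm_ge_zero order_trans by blast
  then have "0 \<le> t" by (simp add: t_def)
  then have "norm (t *\<^sub>R a) \<le> norm (x + t *\<^sub>R a) + norm x"
    using norm_triangle_sub[of "t *\<^sub>R a" "x + t *\<^sub>R a"] by simp
  also have "\<dots> \<le> B + norm x"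
    using B ray[OF \<open>0 \<le> t\<close>] by simp
  also have "\<dots> < norm (t *\<^sub>R a)"
    using \<open>a \<noteq> 0\<close> \<open>0 \<le> t\<close> by (simp add: t_def)
  finally show False by simp
qed

lemma facet_normals_subset_dual_polytope: "facet_normals \<Delta> \<subseteq> dual_polytope \<Delta>"
  by (simp add: dual_polytope_def hull_subset)

lemma reflexive_zero_in_dual_polytope:
  assumes "reflexive \<Delta>"
  shows "0 \<in> dual_polytope \<Delta>"
proof (rule ccontr)
  assume "0 \<notin> dual_polytope \<Delta>"
  then obtain a where "a \<noteq> 0" "\<forall>y\<in>dual_polytope \<Delta>. 0 \<le> a \<bullet> y"
    using separating_hyperplane_set_0 by (metis convex_convex_hull dual_polytope_def)
  then show False
    using reflexive_facet_normals_nonneg_imp_zero[OF assms] facet_normals_subset_dual_polytope by blast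
qed

lemma dual_polytope_subset_halfspace:
  assumes "\<And>e. e \<in> facet_normals \<Delta> \<Longrightarrow> -1 \<le> x \<bullet> e"
  shows "dual_polytope \<Delta> \<subseteq> {y. -1 \<le> x \<bullet> y}"
  unfolding dual_polytope_def using assms by (intro hull_minimal) (auto simp: convex_halfspace_ge)

lemma reflexive_frontier_dual_polytope_tight:
  fixes v :: "real^'n"
  assumes "reflexive \<Delta>" "v \<in> dual_polytope \<Delta>" "v \<in> frontier (dual_polytope \<Delta>)"
  obtains m where "m \<in> \<Delta>" "m \<bullet> v = -1"
proof -
  obtain a where "a \<noteq> 0" and a: "\<And>y. y \<in> dual_polytope \<Delta> \<Longrightarrow> a \<bullet> v \<le> a \<bullet> y"
    using supporting_hyperplane_frontier[of "dual_polytope \<Delta>" v] assms(2,3)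
    by (metis convex_convex_hull dual_polytope_def frontier_def DiffD2)
  have "a \<bullet> v < 0"
  proof (rule ccontr)
    assume "\<not> a \<bullet> v < 0"
    then have "a = 0"
      using reflexive_facet_normals_nonneg_imp_zero[OF assms(1)] a facet_normals_subset_dual_polytope
      by (meson not_less order_trans subsetD)
    with \<open>a \<noteq> 0\<close> show False ..
  qed
  define m where "m = (-1 / (a \<bullet> v)) *\<^sub>R a"
  have "m \<in> \<Delta>"
  proof (subst reflexive_eq_facet_halfspaces[OF assms(1)], intro CollectI ballI)
    fix e assume "e \<in> facet_normals \<Delta>"
    then have "a \<bullet> v \<le> a \<bullet> e"
      using a facet_normals_subset_dual_polytope by blast
    then show "-1 \<le> m \<bullet> e"
      using \<open>a \<bullet> v < 0\<close> by (simp add: m_def field_simps)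
  qed
  moreover have "m \<bullet> v = -1"
    using \<open>a \<bullet> v < 0\<close> by (simp add: m_def)
  ultimately show thesis by (rule that)
qed

lemma minkowski_sum_lattice_polytopes_inner_neg:
  assumes "\<forall>j\<in>{1..r}. lattice_polytope (D j)" "m \<in> minkowski_sum r D"
    and "lattice_point v" "m \<bullet> v < 0"
  obtains j g where "j \<in> {1..r}" "g \<in> D j" "g \<bullet> v \<le> -1"
proof -
  obtain f where f: "\<forall>j\<in>{1..r}. f j \<in> D j" "m = (\<Sum>j=1..r. f j)"
    using assms(2) by (auto simp: minkowski_sum_def)
  have "\<forall>j\<in>{1..r}. \<exists>g. g \<in> D j \<and> lattice_point g \<and> g \<bullet> v \<le> f j \<bullet> v"
    using lattice_polytope_inner_min_at_lattice_point assms(1) f(1) by (metis empty_iff)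
  then obtain g where g: "\<forall>j\<in>{1..r}. g j \<in> D j \<and> lattice_point (g j) \<and> g j \<bullet> v \<le> f j \<bullet> v"
    by metis
  have "(\<Sum>j=1..r. g j \<bullet> v) \<le> (\<Sum>j=1..r. f j \<bullet> v)"
    using g by (intro sum_mono) blast
  also have "\<dots> < 0"
    using assms(4) f(2) by (simp add: inner_sum_left)
  finally obtain j where j: "j \<in> {1..r}" "g j \<bullet> v < 0"
    by (metis not_less sum_nonneg)
  moreover obtain k :: int where "g j \<bullet> v = of_int k"
    using lattice_point_inner_Ints g j(1) assms(3) by (meson Ints_cases)
  ultimately have "g j \<bullet> v \<le> -1"
    by simp
  then show thesis
    using that j(1) g by blast
qed

lemma nef_partition_summand_inner_facet_normal:
  assumes "nef_partition \<Delta> r D" "j \<in> {1..r}" "g \<in> D j" "e \<in> facet_normals \<Delta>"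
  shows "-1 \<le> g \<bullet> e" and "g \<bullet> e = -1 \<Longrightarrow> supp_phi (D j) e = 1"
proof -
  have "supp_phi (D j) e \<in> {0, 1}" "lattice_polytope (D j)"
    using assms by (auto simp: nef_partition_def)
  moreover from this(2) have "- supp_phi (D j) e \<le> g \<bullet> e"
    using assms(3) by (rule supp_phi_le_inner)
  ultimately show "-1 \<le> g \<bullet> e" and "g \<bullet> e = -1 \<Longrightarrow> supp_phi (D j) e = 1"
    by auto
qed

lemma nef_partition_face_subset_dual_nef:
  assumes "nef_partition \<Delta> r D" "j \<in> {1..r}" "g \<in> D j"
  shows "dual_polytope \<Delta> \<inter> {y. g \<bullet> y = -1} \<subseteq> dual_nef \<Delta> D j"
proof -
  have "dual_polytope \<Delta> \<inter> {y. g \<bullet> y = -1} = convex hull {e\<in>facet_normals \<Delta>. g \<bullet> e = -1}"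
    unfolding dual_polytope_def
    using nef_partition_summand_inner_facet_normal(1)[OF assms]
    by (rule convex_hull_Int_supporting_hyperplane_ge)
  also have "\<dots> \<subseteq> dual_nef \<Delta> D j"
    unfolding dual_nef_def
    using nef_partition_summand_inner_facet_normal(2)[OF assms] by (intro hull_mono) auto
  finally show ?thesis .
qed

lemma dual_nef_subset_dual_polytope:
  assumes "reflexive \<Delta>"
  shows "dual_nef \<Delta> D j \<subseteq> dual_polytope \<Delta>"
  unfolding dual_nef_def
  using reflexive_zero_in_dual_polytope[OF assms] facet_normals_subset_dual_polytope
  by (intro hull_minimal) (auto simp: dual_polytope_def)

theorem mainTheorem10:
  fixes \<Delta> :: "(real^'n) set" and D :: "nat \<Rightarrow> (real^'n) set" and r :: nat
    and v :: "real^'n" and \<Gamma> :: "(real^'n) set"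
  assumes "nef_partition \<Delta> r D"
    and "lattice_point v"
    and "v \<in> frontier (dual_polytope \<Delta>)"
    and "\<Gamma> face_of dual_polytope \<Delta>" and "v \<in> \<Gamma>"
    and "\<forall>G. G face_of dual_polytope \<Delta> \<and> v \<in> G \<longrightarrow> \<Gamma> \<subseteq> G"
  shows "\<exists>i\<in>{1..r}. \<Gamma> face_of dual_nef \<Delta> D i"
proof -
  have refl: "reflexive \<Delta>" and summands: "\<forall>j\<in>{1..r}. lattice_polytope (D j)"
    and sum: "\<Delta> = minkowski_sum r D"
    using assms(1) by (auto simp: nef_partition_def)
  have v: "v \<in> dual_polytope \<Delta>"
    using assms(4,5) face_of_imp_subset by blast
  obtain m where "m \<in> \<Delta>" "m \<bullet> v = -1"
    using reflexive_frontier_dual_polytope_tight refl v assms(3) by blast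
  then obtain j g where j: "j \<in> {1..r}" and g: "g \<in> D j" "g \<bullet> v \<le> -1"
    using minkowski_sum_lattice_polytopes_inner_neg[OF summands _ assms(2)] sum by force
  define F where "F = dual_polytope \<Delta> \<inter> {y. g \<bullet> y = -1}"
  have supp: "dual_polytope \<Delta> \<subseteq> {y. -1 \<le> g \<bullet> y}"
    using dual_polytope_subset_halfspace nef_partition_summand_inner_facet_normal(1)[OF assms(1) j g(1)]
    by blast
  then have "F face_of dual_polytope \<Delta>"
    unfolding F_def by (intro face_of_Int_supporting_hyperplane_ge) (auto simp: dual_polytope_def)
  moreover have "v \<in> F"
    using supp v g(2) by (force simp: F_def)
  ultimately have "\<Gamma> \<subseteq> F"
    using assms(6) by blast
  also have "F \<subseteq> dual_nef \<Delta> D j"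
    unfolding F_def using assms(1) j g(1) by (rule nef_partition_face_subset_dual_nef)
  finally have "\<Gamma> face_of dual_nef \<Delta> D j"
    using face_of_subset assms(4) dual_nef_subset_dual_polytope[OF refl] by blast
  with j show ?thesis by blast
qed

end
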